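(* Let $d_{\text{m}}\ge 1$, $1\le r\le d_{\text{m}}$, and $\boldsymbol{W}_{\text{qk},i}\in\mathbb{R}^{d_{\text{m}}\times d_{\text{m}}}$. Let $\boldsymbol{x}_{\text{q}}$ and $\boldsymbol{x}_{\text{kv}}$ be independent random row vectors in $\mathbb{R}^{d_{\text{m}}}$ with distributions $\mathbb{X}_\text{q}$, $\mathbb{X}_\text{kv}$ having finite second moments, such that the autocorrelation matrices $\boldsymbol{R}_{\mathbb{X}_\text{q}\mathbb{X}_\text{q}}:=\mathbb{E}\{\boldsymbol{x}_{\text{q}}^T\boldsymbol{x}_{\text{q}}\}$ and $\boldsymbol{R}_{\mathbb{X}_\text{kv}\mathbb{X}_\text{kv}}:=\mathbb{E}\{\boldsymbol{x}_{\text{kv}}^T\boldsymbol{x}_{\text{kv}}\}$ are positive definite, with unique symmetric square roots $\boldsymbol{R}_{\mathbb{X}_\text{q}\mathbb{X}_\text{q}}^{1/2}$, $\boldsymbol{R}_{\mathbb{X}_\text{kv}\mathbb{X}_\text{kv}}^{1/2}$. Consider the problem $$\operatorname{arg\,min}_{\widetilde{\boldsymbol{W}}_{\text{qk},i}}\ \mathbb{E}\left\{\left(\boldsymbol{x}_{\text{q}}(\boldsymbol{W}_{\text{qk},i}-\widetilde{\boldsymbol{W}}_{\text{qk},i})\boldsymbol{x}_{\text{kv}}^T\right)^2\right\}\quad\text{s.t.}\quad\operatorname{rank}(\widetilde{\boldsymbol{W}}_{\text{qk},i})=r.$$ Then an optimal solution is $$\widetilde{\boldsymbol{W}}_{\t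ext{qk},i}=\left(\boldsymbol{R}_{\mathbb{X}_\text{q}\mathbb{X}_\text{q}}^{1/2}\right)^{-1}\mathrm{SVD}_r\!\left(\boldsymbol{R}_{\mathbb{X}_\text{q}\mathbb{X}_\text{q}}^{1/2}\boldsymbol{W}_{\text{qk},i}\boldsymbol{R}_{\mathbb{X}_\text{kv}\mathbb{X}_\text{kv}}^{1/2}\right)\left(\boldsymbol{R}_{\mathbb{X}_\text{kv}\mathbb{X}_\text{kv}}^{1/2}\right)^{-1}.$$
   Context: $\mathrm{SVD}_r(\boldsymbol{M})$ denotes the truncated SVD: if $\boldsymbol{M}=\boldsymbol{U}\boldsymbol{\Sigma}\boldsymbol{V}^T$ is a singular value decomposition with singular values in decreasing order, then $\mathrm{SVD}_r(\boldsymbol{M})=\boldsymbol{U}_{:,:r}\boldsymbol{\Sigma}_{:r,:r}\boldsymbol{V}^T_{:r,:}$. Here $\boldsymbol{W}_{\text{qk},i}=\boldsymbol{W}_{\text{q},i}\boldsymbol{W}_{\text{k},i}^T$ is the fused query/key weight of attention head $i$, and the objective is the expected squared error of the pre-softmax attention score $\boldsymbol{x}_{\text{q}}\boldsymbol{W}_{\text{qk},i}\boldsymbol{x}_{\text{kv}}^T$. Vectors are row vectors. *)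

theory Defs
  imports "HOL-Analysis.Analysis" "HOL-Probability.Probability"
begin

type_synonym 'n rmat = "real^'n^'n"

text \<open>Matrices are real^'n^'n; the index type 'n is finite (d_m = CARD('n)) and
  linearly ordered, so that "first r indices" and "decreasing order" make sense.\<close>

definition diag_mat :: "('n::finite \<Rightarrow> real) \<Rightarrow> real^'n^'n" where
  "diag_mat s = (\<chi> i j. if i = j then s i else 0)"

definition is_svd :: "('n::{finite,linorder}) rmat \<Rightarrow> 'n rmat \<Rightarrow> ('n \<Rightarrow> real) \<Rightarrow> 'n rmat \<Rightarrow> bool" where 
  "is_svd M U s V \<longleftrightarrow> orthogonal_matrix U \<and> orthogonal_matrix V \<and>
     (\<forall>i. 0 \<le> s i) \<and> (\<forall>i j. i \<le> j \<longrightarrow> s j \<le> s i) \<and>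
     M = U ** diag_mat s ** transpose V"

definition idx_pos :: "'n::{finite,linorder} \<Rightarrow> nat" where
  "idx_pos i = card {k. k < i}"

text \<open>U_{:,:r} Sigma_{:r,:r} V^T_{:r,:}, written as U diag(truncated s) V^T.\<close>
definition svd_trunc :: "nat \<Rightarrow> ('n::{finite,linorder}) rmat \<Rightarrow> ('n \<Rightarrow> real) \<Rightarrow> 'n rmat \<Rightarrow> 'n rmat" where 
  "svd_trunc r U s V = U ** diag_mat (\<lambda>i. if idx_pos i < r then s i else 0) ** transpose V"

definition autocorr :: "'a measure \<Rightarrow> ('a \<Rightarrow> real^'n) \<Rightarrow> real^'n^'n" where
  "autocorr M x = (\<chi> i j. integral\<^sup>L M (\<lambda>\<omega>. x \<omega> $ i * x \<omega> $ j))"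

definition pos_def_mat :: "real^'n^'n \<Rightarrow> bool" where
  "pos_def_mat A \<longleftrightarrow> transpose A = A \<and> (\<forall>v. v \<noteq> 0 \<longrightarrow> 0 < v \<bullet> (A *v v))"

definition pos_semidef_mat :: "real^'n^'n \<Rightarrow> bool" where
  "pos_semidef_mat A \<longleftrightarrow> transpose A = A \<and> (\<forall>v. 0 \<le> v \<bullet> (A *v v))"

definition is_sqrt_mat :: "real^'n^'n \<Rightarrow> real^'n^'n \<Rightarrow> bool" where
  "is_sqrt_mat S R \<longleftrightarrow> pos_semidef_mat S \<and> S ** S = R"

definition qk_err :: "'a measure \<Rightarrow> ('a \<Rightarrow> real^'n) \<Rightarrow> ('a \<Rightarrow> real^'n) \<Rightarrow> real^'n^'n \<Rightarrow> real^'n^'n \<Rightarrow> real" where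
  "qk_err M xq xkv W Wt = integral\<^sup>L M (\<lambda>\<omega>. (xq \<omega> \<bullet> ((W - Wt) *v xkv \<omega>))\<^sup>2)"

end

theory Submission
  imports Defs
begin

(*
  For independent x_q and x_kv, E[(x_q A x_kv^T)^2] = <R_q A R_kv, A> = |R_q^(1/2) A R_kv^(1/2)|_F^2,
  so the error of a candidate W' is |B - R_q^(1/2) W' R_kv^(1/2)|_F^2 with B = R_q^(1/2) W R_kv^(1/2).
  Conjugation by the invertible square roots preserves rank, so the problem is the best
  Frobenius approximation of B of rank at most r, which SVD_r(B) solves by Eckart-Young.

  Orthogonal invariance of the Frobenius norm reduces Eckart-Young to D = diag(s). For C of
  rank at most r, let Q be an orthonormal basis of the row space of C and p_k the squared length
  of the projection of the k-th unit vector onto span Q. Row k of D - C then has squared length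
  at least s_k^2 (1 - p_k). As 0 <= p_k <= 1 and the p_k sum to |Q| <= r, the sum of the
  s_k^2 p_k is at most the sum of the r largest s_k^2, leaving the tail sum of the s_k^2,
  which is the error of SVD_r(D), as a lower bound for |D - C|_F^2.
*)

section \<open>Frobenius norm\<close>

lemma norm_vec_sq: "(norm (v :: real^'n::finite))\<^sup>2 = (\<Sum>k\<in>UNIV. (v $ k)\<^sup>2)"
  by (simp add: norm_vec_def L2_set_def sum_nonneg)

lemma norm_matrix_sq_rows: "(norm (X :: real^'n^'m))\<^sup>2 = (\<Sum>i\<in>UNIV. (norm (X $ i))\<^sup>2)"
  by (simp add: power2_norm_eq_inner inner_vec_def)

lemma norm_matrix_sq_entries: "(norm (X :: real^'n^'m))\<^sup>2 = (\<Sum>i\<in>UNIV. \<Sum>j\<in>UNIV. (X $ i $ j)\<^sup>2)"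
  by (simp add: norm_matrix_sq_rows norm_vec_sq)

lemma norm_transpose: "norm (transpose X) = norm (X :: real^'n^'m)"
proof -
  have "(norm (transpose X))\<^sup>2 = (norm X)\<^sup>2"
    unfolding norm_matrix_sq_entries by (simp add: transpose_def) (rule sum.swap)
  then show ?thesis by simp
qed

lemma norm_matrix_mult_orthogonal_right:
  fixes X :: "real^'n^'m" and Q :: "real^'n^'n"
  assumes "orthogonal_matrix Q"
  shows "norm (X ** Q) = norm X"
proof -
  have "orthogonal_transformation ((*v) (transpose Q))"
    using assms by (simp add: orthogonal_transformation_matrix)
  then have "norm (x v* Q) = norm x" for x
    by (metis orthogonal_transformation_norm transpose_transpose vector_transpose_matrix)
  moreover have "(X ** Q) $ i = X $ i v* Q" for i
    by (simp add: vec_eq_iff matrix_matrix_mult_def vector_matrix_mult_def)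
  ultimately have "(norm (X ** Q))\<^sup>2 = (norm X)\<^sup>2"
    unfolding norm_matrix_sq_rows by simp
  then show ?thesis by simp
qed

lemma norm_matrix_mult_orthogonal_left:
  fixes X :: "real^'m^'n" and Q :: "real^'n^'n"
  assumes "orthogonal_matrix Q"
  shows "norm (Q ** X) = norm X"
  using norm_matrix_mult_orthogonal_right[of "transpose Q" "transpose X"] assms
  by (simp add: norm_transpose flip: matrix_transpose_mul)

lemma matrix_diff_ldistrib: "(A :: real^'n^'m) ** (B - C) = A ** B - A ** C"
  by (simp add: matrix_matrix_mult_def vec_eq_iff sum_subtractf algebra_simps)

lemma matrix_diff_rdistrib: "((A :: real^'n^'m) - B) ** C = A ** C - B ** C"
  by (simp add: matrix_matrix_mult_def vec_eq_iff sum_subtractf algebra_simps)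

lemma sum_swap3: "(\<Sum>i\<in>A. \<Sum>j\<in>B. \<Sum>k\<in>C. f i j k) = (\<Sum>k\<in>C. \<Sum>j\<in>B. \<Sum>i\<in>A. f i j k)"
proof -
  have "(\<Sum>i\<in>A. \<Sum>j\<in>B. \<Sum>k\<in>C. f i j k) = (\<Sum>i\<in>A. \<Sum>k\<in>C. \<Sum>j\<in>B. f i j k)"
    by (intro sum.cong refl sum.swap)
  also have "\<dots> = (\<Sum>k\<in>C. \<Sum>i\<in>A. \<Sum>j\<in>B. f i j k)"
    by (rule sum.swap)
  also have "\<dots> = (\<Sum>k\<in>C. \<Sum>j\<in>B. \<Sum>i\<in>A. f i j k)"
    by (intro sum.cong refl sum.swap)
  finally show ?thesis .
qed

lemma inner_matrix_mult_left:
  fixes B :: "real^'n^'m" and X :: "real^'p^'n"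
  shows "(B ** X) \<bullet> Y = X \<bullet> (transpose B ** Y)"
  by (simp add: inner_vec_def matrix_matrix_mult_def transpose_def sum_distrib_left sum_distrib_right
      mult_ac) (rule sum_swap3)

lemma inner_matrix_mult_right:
  fixes B :: "real^'n^'p" and X :: "real^'p^'m"
  shows "(X ** B) \<bullet> Y = X \<bullet> (Y ** transpose B)"
  by (simp add: inner_vec_def matrix_matrix_mult_def transpose_def sum_distrib_left sum_distrib_right
      mult_ac) (intro sum.cong refl sum.swap)

lemma norm_sandwich_sq:
  fixes S :: "real^'m^'m" and K :: "real^'n^'n" and A :: "real^'n^'m"
  assumes "transpose S = S" "transpose K = K"
  shows "(norm (S ** A ** K))\<^sup>2 = (S ** S ** A ** (K ** K)) \<bullet> A"
proof -
  have "(norm (S ** A ** K))\<^sup>2 = (S ** (A ** K)) \<bullet> (S ** A ** K)"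
    by (simp add: power2_norm_eq_inner matrix_mul_assoc)
  also have "\<dots> = (A ** K) \<bullet> (S ** S ** A ** K)"
    by (subst inner_matrix_mult_left) (simp add: assms matrix_mul_assoc)
  also have "\<dots> = A \<bullet> (S ** S ** A ** (K ** K))"
    by (subst inner_matrix_mult_right) (simp add: assms matrix_mul_assoc)
  finally show ?thesis
    by (simp add: inner_commute)
qed

section \<open>The expected error as a weighted Frobenius norm\<close>

lemma bilinear_form_sq_expand:
  fixes x :: "real^'m" and y :: "real^'n" and A :: "real^'n^'m"
  shows "(x \<bullet> (A *v y))\<^sup>2 =
    (\<Sum>i\<in>UNIV. \<Sum>j\<in>UNIV. \<Sum>k\<in>UNIV. \<Sum>l\<in>UNIV. A$i$j * A$k$l * ((x$i * x$k) * (y$l * y$j)))"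
proof -
  have "x \<bullet> (A *v y) = (\<Sum>i\<in>UNIV. \<Sum>j\<in>UNIV. x$i * A$i$j * y$j)"
    by (simp add: inner_vec_def matrix_vector_mult_def sum_distrib_left mult.assoc)
  then show ?thesis
    by (simp add: power2_eq_square sum_product mult_ac) (rule sum.cong[OF refl], rule sum.swap)
qed

lemma inner_sandwich_eq_quadruple_sum:
  fixes R :: "real^'m^'m" and P :: "real^'n^'n" and A :: "real^'n^'m"
  shows "(R ** A ** P) \<bullet> A =
    (\<Sum>i\<in>UNIV. \<Sum>j\<in>UNIV. \<Sum>k\<in>UNIV. \<Sum>l\<in>UNIV. A$i$j * A$k$l * (R$i$k * P$l$j))"
  by (simp add: inner_vec_def matrix_matrix_mult_def sum_distrib_left sum_distrib_right mult_ac)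
    (intro sum.cong refl sum.swap)

lemma integrable_mult_components:
  fixes x :: "'a \<Rightarrow> real^'n"
  assumes "x \<in> borel_measurable M" "integrable M (\<lambda>\<omega>. (norm (x \<omega>))\<^sup>2)"
  shows "integrable M (\<lambda>\<omega>. x \<omega> $ i * x \<omega> $ k)"
proof (rule Bochner_Integration.integrable_bound[OF assms(2)])
  have "(\<lambda>\<omega>. x \<omega> $ m) \<in> borel_measurable M" for m
    using assms(1) borel_measurable_nth by (rule measurable_compose)
  then show "(\<lambda>\<omega>. x \<omega> $ i * x \<omega> $ k) \<in> borel_measurable M"
    by (intro borel_measurable_times)
  have "\<bar>x \<omega> $ i\<bar> * \<bar>x \<omega> $ k\<bar> \<le> norm (x \<omega>) * norm (x \<omega>)" for \<omega>
    by (intro mult_mono component_le_norm_cart) auto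
  then show "AE \<omega> in M. norm (x \<omega> $ i * x \<omega> $ k) \<le> norm ((norm (x \<omega>))\<^sup>2)"
    by (simp add: abs_mult power2_eq_square)
qed

lemma (in prob_space) expectation_bilinear_form_sq:
  fixes x y :: "'a \<Rightarrow> real^'n" and A :: "real^'n^'n"
  assumes "x \<in> borel_measurable M" and "y \<in> borel_measurable M"
    and indep: "indep_var borel x borel y"
    and "integrable M (\<lambda>\<omega>. (norm (x \<omega>))\<^sup>2)" and "integrable M (\<lambda>\<omega>. (norm (y \<omega>))\<^sup>2)"
  shows "(\<integral>\<omega>. (x \<omega> \<bullet> (A *v y \<omega>))\<^sup>2 \<partial>M) = (autocorr M x ** A ** autocorr M y) \<bullet> A"
proof -
  have indep_products:
    "indep_var borel (\<lambda>\<omega>. x \<omega> $ i * x \<omega> $ k) borel (\<lambda>\<omega>. y \<omega> $ l * y \<omega> $ j)" for i k l j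
    using indep_var_compose[OF indep, of "\<lambda>v. v $ i * v $ k" borel "\<lambda>v. v $ l * v $ j" borel]
    by (simp add: comp_def)
  note integrable_products =
    integrable_mult_components[OF assms(1,4)] integrable_mult_components[OF assms(2,5)]
  have "(\<integral>\<omega>. (x \<omega> \<bullet> (A *v y \<omega>))\<^sup>2 \<partial>M) =
    (\<Sum>i\<in>UNIV. \<Sum>j\<in>UNIV. \<Sum>k\<in>UNIV. \<Sum>l\<in>UNIV.
       A$i$j * A$k$l * (\<integral>\<omega>. (x \<omega> $ i * x \<omega> $ k) * (y \<omega> $ l * y \<omega> $ j) \<partial>M))"
    unfolding bilinear_form_sq_expand
    by (simp add: integrable_sum indep_var_integrable[OF indep_products integrable_products])
  also have "\<dots> = (\<Sum>i\<in>UNIV. \<Sum>j\<in>UNIV. \<Sum>k\<in>UNIV. \<Sum>l\<in>UNIV.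
       A$i$j * A$k$l * (autocorr M x $ i $ k * autocorr M y $ l $ j))"
    by (simp add: autocorr_def indep_var_lebesgue_integral[OF indep_products integrable_products])
  also have "\<dots> = (autocorr M x ** A ** autocorr M y) \<bullet> A"
    by (rule inner_sandwich_eq_quadruple_sum[symmetric])
  finally show ?thesis .
qed

lemma qk_err_eq_norm_sq:
  fixes xq xkv :: "'a \<Rightarrow> real^'n"
  assumes "prob_space M"
    and "xq \<in> borel_measurable M" and "xkv \<in> borel_measurable M"
    and "prob_space.indep_var M borel xq borel xkv"
    and "integrable M (\<lambda>\<omega>. (norm (xq \<omega>))\<^sup>2)"
    and "integrable M (\<lambda>\<omega>. (norm (xkv \<omega>))\<^sup>2)"
    and "is_sqrt_mat Sq (autocorr M xq)" and "is_sqrt_mat Skv (autocorr M xkv)"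
  shows "qk_err M xq xkv W Wt = (norm (Sq ** (W - Wt) ** Skv))\<^sup>2"
proof -
  have "transpose Sq = Sq" "transpose Skv = Skv"
    using assms(7,8) by (simp_all add: is_sqrt_mat_def pos_semidef_mat_def)
  then show ?thesis
    using prob_space.expectation_bilinear_form_sq[OF assms(1-6)] assms(7,8)
    by (simp add: qk_err_def norm_sandwich_sq is_sqrt_mat_def)
qed

section \<open>Invertibility and rank\<close>

lemma matrix_inv_right: "invertible A \<Longrightarrow> A ** matrix_inv A = mat 1"
  and matrix_inv_left: "invertible A \<Longrightarrow> matrix_inv A ** A = mat 1"
  unfolding matrix_inv_def invertible_def by (metis (mono_tags, lifting) someI_ex)+

lemma invertible_matrix_inv: "invertible A \<Longrightarrow> invertible (matrix_inv A)"
  using matrix_inv_left matrix_inv_right invertible_def by blast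

lemma invertible_if_pos_def_square:
  fixes S :: "real^'n^'n"
  assumes "pos_def_mat (S ** S)"
  shows "invertible S"
proof -
  have "v = 0" if "S *v v = 0" for v
  proof -
    have "v \<bullet> ((S ** S) *v v) = 0"
      by (simp flip: matrix_vector_mul_assoc add: that)
    then show ?thesis
      using assms by (metis pos_def_mat_def less_irrefl)
  qed
  then show ?thesis
    using matrix_left_invertible_ker invertible_left_inverse by blast
qed

lemma invertible_orthogonal_matrix: "orthogonal_matrix Q \<Longrightarrow> invertible Q"
  unfolding orthogonal_matrix_def invertible_def by blast

lemma rank_invertible_mult:
  fixes A :: "real^'n^'n" and B :: "real^'m^'n"
  assumes "invertible A"
  shows "rank (A ** B) = rank B"
proof -
  obtain A' where "A' ** A = mat 1"
    using assms invertible_left_inverse by blast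
  then have "rank B = rank (A' ** (A ** B))"
    by (simp add: matrix_mul_assoc)
  then show ?thesis
    by (metis le_antisym rank_mul_le_right)
qed

lemma rank_mult_invertible:
  fixes A :: "real^'n^'n" and B :: "real^'n^'m"
  assumes "invertible A"
  shows "rank (B ** A) = rank B"
proof -
  obtain A' where "A ** A' = mat 1"
    using assms invertible_right_inverse by blast
  then have "rank B = rank ((B ** A) ** A')"
    by (simp flip: matrix_mul_assoc)
  then show ?thesis
    by (metis le_antisym rank_mul_le_left)
qed

lemma rank_invertible_sandwich:
  fixes P :: "real^'m^'m" and Q :: "real^'n^'n" and X :: "real^'n^'m"
  assumes "invertible P" "invertible Q"
  shows "rank (P ** X ** Q) = rank X"
  using assms by (simp add: rank_invertible_mult rank_mult_invertible flip: matrix_mul_assoc)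

lemma rank_orthogonal_sandwich:
  fixes P :: "real^'m^'m" and Q :: "real^'n^'n" and X :: "real^'n^'m"
  assumes "orthogonal_matrix P" "orthogonal_matrix Q"
  shows "rank (P ** X ** Q) = rank X"
  using assms by (simp add: rank_invertible_sandwich invertible_orthogonal_matrix)

lemma rank_diag_mat: "rank (diag_mat a :: real^'n^'n) = card {i. a i \<noteq> 0}"
proof -
  define B where "B = (\<lambda>i. axis i (1::real)) ` {i. a i \<noteq> 0}"
  have row: "row i (diag_mat a) = a i *\<^sub>R axis i 1" for i
    by (simp add: row_def diag_mat_def axis_def vec_eq_iff)
  have "a i *\<^sub>R axis i 1 \<in> span B" for i
    by (cases "a i = 0") (simp_all add: B_def span_zero span_mul span_base)
  then have "rows (diag_mat a) \<subseteq> span B"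
    by (auto simp: rows_def row)
  moreover have "B \<subseteq> span (rows (diag_mat a))"
  proof
    fix v assume "v \<in> B"
    then obtain i where "a i \<noteq> 0" "v = inverse (a i) *\<^sub>R row i (diag_mat a)"
      by (auto simp: B_def row)
    then show "v \<in> span (rows (diag_mat a))"
      by (auto simp: rows_def intro: span_mul span_base)
  qed
  ultimately have "rank (diag_mat a) = dim B"
    by (metis row_rank_def dim_span span_eq)
  also have "\<dots> = card B"
    by (rule dim_eq_card_independent, rule independent_mono[OF independent_Basis])
      (auto simp: B_def Basis_vec_def)
  also have "\<dots> = card {i. a i \<noteq> 0}"
    unfolding B_def by (rule card_image) (auto simp: inj_on_def axis_eq_axis)
  finally show ?thesis .
qed

lemma strict_mono_idx_pos: "strict_mono (idx_pos :: 'n::{finite,linorder} \<Rightarrow> nat)"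
  unfolding strict_mono_def idx_pos_def by (auto intro!: psubset_card_mono)

lemma idx_pos_image: "idx_pos ` (UNIV :: 'n::{finite,linorder} set) = {..<CARD('n)}"
proof (rule card_subset_eq)
  have "idx_pos i < CARD('n)" for i :: 'n
    unfolding idx_pos_def by (rule psubset_card_mono) auto
  then show "idx_pos ` (UNIV :: 'n set) \<subseteq> {..<CARD('n)}"
    by auto
  show "card (idx_pos ` (UNIV :: 'n set)) = card {..<CARD('n)}"
    using card_image[OF strict_mono_imp_inj_on[OF strict_mono_idx_pos]] by simp
qed simp

lemma card_idx_pos_less:
  assumes "r \<le> CARD('n::{finite,linorder})"
  shows "card {k::'n. idx_pos k < r} = r"
proof -
  have "{..<r} \<subseteq> idx_pos ` (UNIV :: 'n set)"
    using idx_pos_image[where 'n='n] assms by auto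
  then have "idx_pos ` {k::'n. idx_pos k < r} = {..<r}"
    by fastforce
  moreover have "inj_on idx_pos {k::'n. idx_pos k < r}"
    using strict_mono_idx_pos strict_mono_imp_inj_on inj_on_subset by blast
  ultimately show ?thesis
    by (metis card_image card_lessThan)
qed

section \<open>The Eckart--Young theorem\<close>

lemma
  fixes y x :: "'a::real_inner"
  assumes "finite Q" "pairwise orthogonal Q" "\<And>b. b \<in> Q \<Longrightarrow> norm b = 1"
  shows bessel_inequality: "(\<Sum>b\<in>Q. (y \<bullet> b)\<^sup>2) \<le> (norm y)\<^sup>2"
    and norm_diff_span_orthonormal_ge:
      "x \<in> span Q \<Longrightarrow> (norm y)\<^sup>2 - (\<Sum>b\<in>Q. (y \<bullet> b)\<^sup>2) \<le> (norm (y - x))\<^sup>2"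
proof -
  define p where "p = (\<Sum>b\<in>Q. (y \<bullet> b) *\<^sub>R b)"
  have inner_basis: "b \<bullet> c = (if b = c then 1 else 0)" if "b \<in> Q" "c \<in> Q" for b c
    using that assms(2,3) by (auto simp: pairwise_def orthogonal_def norm_eq_1)
  have p_inner: "p \<bullet> c = y \<bullet> c" if "c \<in> Q" for c
  proof -
    have "p \<bullet> c = (\<Sum>b\<in>Q. (y \<bullet> b) * (b \<bullet> c))"
      by (simp add: p_def inner_sum_left)
    also have "\<dots> = (\<Sum>b\<in>Q. if b = c then y \<bullet> b else 0)"
      by (rule sum.cong) (auto simp: inner_basis that)
    finally show ?thesis
      using assms(1) that by simp
  qed
  have norm_p: "(norm p)\<^sup>2 = (\<Sum>b\<in>Q. (y \<bullet> b)\<^sup>2)"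
  proof -
    have "p \<bullet> p = (\<Sum>b\<in>Q. (y \<bullet> b) * (p \<bullet> b))"
      by (subst (2) p_def) (simp add: inner_sum_right)
    then show ?thesis
      unfolding power2_norm_eq_inner by (simp add: p_inner power2_eq_square)
  qed
  have "orthogonal (y - p) z" if "z \<in> span Q" for z
    using that by (rule orthogonal_to_span) (simp add: orthogonal_def inner_diff_left p_inner)
  then have pythagoras: "(norm (y - z))\<^sup>2 = (norm (y - p))\<^sup>2 + (norm (p - z))\<^sup>2" if "z \<in> span Q" for z
    using that norm_add_Pythagorean[of "y - p" "p - z"] span_diff[of p Q z]
    by (simp add: p_def span_sum span_mul span_base)
  show "(\<Sum>b\<in>Q. (y \<bullet> b)\<^sup>2) \<le> (norm y)\<^sup>2"
    using pythagoras[OF span_zero] norm_p by simp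
  show "(norm y)\<^sup>2 - (\<Sum>b\<in>Q. (y \<bullet> b)\<^sup>2) \<le> (norm (y - x))\<^sup>2" if "x \<in> span Q"
    using pythagoras[OF that] pythagoras[OF span_zero] norm_p by simp
qed

lemma sum_mult_le_sum_top:
  fixes p t :: "'a::finite \<Rightarrow> real"
  assumes p: "\<And>k. 0 \<le> p k" "\<And>k. p k \<le> 1" and sum_p: "sum p UNIV \<le> card T"
    and t: "\<And>k. 0 \<le> t k" "\<And>k k'. k \<in> T \<Longrightarrow> k' \<notin> T \<Longrightarrow> t k' \<le> t k"
  shows "(\<Sum>k\<in>UNIV. p k * t k) \<le> sum t T"
proof -
  define c where "c = Max (insert 0 (t ` (- T)))"
  have c: "0 \<le> c" "\<And>k. k \<notin> T \<Longrightarrow> t k \<le> c" "\<And>k. k \<in> T \<Longrightarrow> c \<le> t k"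
    using t by (auto simp: c_def)
  have "p k * (t k - c) \<le> (if k \<in> T then t k - c else 0)" for k
    using c p[of k] by (auto intro: mult_left_le_one_le mult_nonneg_nonpos)
  then have "(\<Sum>k\<in>UNIV. p k * (t k - c)) \<le> (\<Sum>k\<in>UNIV. if k \<in> T then t k - c else 0)"
    by (rule sum_mono)
  also have "\<dots> = (\<Sum>k\<in>T. t k - c)"
    by (simp add: sum.If_cases)
  finally have "(\<Sum>k\<in>UNIV. p k * (t k - c)) \<le> (\<Sum>k\<in>T. t k - c)" .
  moreover have "c * sum p UNIV \<le> c * card T"
    using c(1) sum_p by (rule mult_left_mono[rotated])
  ultimately show ?thesis
    by (simp add: algebra_simps sum_subtractf sum_distrib_left)
qed

lemma norm_diag_mat_sq: "(norm (diag_mat f))\<^sup>2 = (\<Sum>i\<in>UNIV. (f i)\<^sup>2)"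
proof -
  have "(diag_mat f $ i $ j)\<^sup>2 = (if i = j then (f i)\<^sup>2 else 0)" for i j
    by (simp add: diag_mat_def)
  then show ?thesis
    by (simp add: norm_matrix_sq_entries)
qed

lemma
  fixes Q :: "(real^'n) set"
  assumes "finite Q" "pairwise orthogonal Q" "\<And>b. b \<in> Q \<Longrightarrow> norm b = 1"
  shows sum_sq_component_orthonormal_le_1: "(\<Sum>b\<in>Q. (b $ k)\<^sup>2) \<le> 1"
    and sum_sum_sq_component_orthonormal: "(\<Sum>k\<in>UNIV. \<Sum>b\<in>Q. (b $ k)\<^sup>2) = card Q"
proof -
  show "(\<Sum>b\<in>Q. (b $ k)\<^sup>2) \<le> 1"
    using bessel_inequality[OF assms, of "axis k 1"] by (simp add: inner_axis')
  have "(\<Sum>k\<in>UNIV. \<Sum>b\<in>Q. (b $ k)\<^sup>2) = (\<Sum>b\<in>Q. (norm b)\<^sup>2)"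
    unfolding norm_vec_sq by (rule sum.swap)
  then show "(\<Sum>k\<in>UNIV. \<Sum>b\<in>Q. (b $ k)\<^sup>2) = card Q"
    using assms(3) by simp
qed

lemma norm_diag_mat_diff_ge:
  fixes s :: "'n::finite \<Rightarrow> real" and C :: "real^'n^'n" and Q :: "(real^'n) set"
  assumes Q: "finite Q" "pairwise orthogonal Q" "\<And>b. b \<in> Q \<Longrightarrow> norm b = 1"
    and rows: "\<And>i. C $ i \<in> span Q"
  shows "(\<Sum>k\<in>UNIV. (s k)\<^sup>2 * (1 - (\<Sum>b\<in>Q. (b $ k)\<^sup>2))) \<le> (norm (diag_mat s - C))\<^sup>2"
proof -
  have "(s i)\<^sup>2 * (1 - (\<Sum>b\<in>Q. (b $ i)\<^sup>2)) \<le> (norm ((diag_mat s - C) $ i))\<^sup>2" for i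
  proof -
    have "axis i (s i) = s i *\<^sub>R axis i 1"
      by (simp add: vec_eq_iff axis_def)
    then have "(norm (axis i (s i)))\<^sup>2 = (s i)\<^sup>2"
      by simp
    moreover have "(\<Sum>b\<in>Q. (axis i (s i) \<bullet> b)\<^sup>2) = (s i)\<^sup>2 * (\<Sum>b\<in>Q. (b $ i)\<^sup>2)"
      by (simp add: inner_axis' sum_distrib_left power_mult_distrib)
    moreover have "(diag_mat s - C) $ i = axis i (s i) - C $ i"
      by (simp add: diag_mat_def axis_def vec_eq_iff)
    ultimately show ?thesis
      using norm_diff_span_orthonormal_ge[OF Q rows, of "axis i (s i)"] by (simp add: algebra_simps)
  qed
  then show ?thesis
    unfolding norm_matrix_sq_rows by (rule sum_mono)
qed

lemma eckart_young_diag: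
  fixes s :: "'n::{finite,linorder} \<Rightarrow> real" and C :: "'n rmat"
  assumes s: "\<And>i. 0 \<le> s i" "\<And>i j. i \<le> j \<Longrightarrow> s j \<le> s i"
    and "rank C \<le> r" "r \<le> CARD('n)"
  shows "(\<Sum>k | r \<le> idx_pos k. (s k)\<^sup>2) \<le> (norm (diag_mat s - C))\<^sup>2"
proof -
  define T where "T = {k::'n. idx_pos k < r}"
  obtain Q where Q: "pairwise orthogonal Q" "\<And>b. b \<in> Q \<Longrightarrow> norm b = 1"
    and "independent Q" "card Q = dim (span (rows C))" "span Q = span (rows C)"
    using orthonormal_basis_subspace[OF subspace_span] by metis
  then have "finite Q" and "card Q \<le> r"
    using \<open>rank C \<le> r\<close> by (auto simp: finiteI_independent row_rank_def)
  define p where "p k = (\<Sum>b\<in>Q. (b $ k)\<^sup>2)" for k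
  have rows_in_span: "C $ i \<in> span Q" for i
    using \<open>span Q = span (rows C)\<close> by (auto simp: rows_def row_def intro!: span_base exI[of _ i])
  have "(\<Sum>k\<in>UNIV. (s k)\<^sup>2 * (1 - p k)) \<le> (norm (diag_mat s - C))\<^sup>2"
    using norm_diag_mat_diff_ge[OF \<open>finite Q\<close> Q rows_in_span] by (simp add: p_def)
  moreover have "(\<Sum>k\<in>UNIV. p k * (s k)\<^sup>2) \<le> (\<Sum>k\<in>T. (s k)\<^sup>2)"
  proof (rule sum_mult_le_sum_top)
    show "0 \<le> p k" for k
      by (simp add: p_def sum_nonneg)
    show "p k \<le> 1" for k
      unfolding p_def by (rule sum_sq_component_orthonormal_le_1[OF \<open>finite Q\<close> Q])
    show "sum p UNIV \<le> real (card T)"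
      using sum_sum_sq_component_orthonormal[OF \<open>finite Q\<close> Q] \<open>card Q \<le> r\<close>
        card_idx_pos_less[OF assms(4)]
      by (simp add: p_def T_def)
    show "(s k')\<^sup>2 \<le> (s k)\<^sup>2" if "k \<in> T" "k' \<notin> T" for k k'
    proof -
      have "idx_pos k < idx_pos k'"
        using that by (simp add: T_def)
      then have "k < k'"
        using strict_mono_less[OF strict_mono_idx_pos] by blast
      then show ?thesis
        using s by (simp add: power_mono)
    qed
  qed simp
  moreover have "(\<Sum>k | r \<le> idx_pos k. (s k)\<^sup>2) = (\<Sum>k\<in>UNIV. (s k)\<^sup>2) - (\<Sum>k\<in>T. (s k)\<^sup>2)"
    using sum.subset_diff[of T UNIV "\<lambda>k. (s k)\<^sup>2"] by (simp add: T_def Diff_eq not_less Compl_eq)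
  ultimately show ?thesis
    by (simp add: algebra_simps sum_subtractf)
qed

lemma norm_diff_svd:
  assumes "is_svd B U s V"
  shows "norm (B - U ** X ** transpose V) = norm (diag_mat s - X)"
proof -
  have "B - U ** X ** transpose V = U ** (diag_mat s - X) ** transpose V"
    using assms by (simp add: is_svd_def matrix_diff_ldistrib matrix_diff_rdistrib)
  then show ?thesis
    using assms by (simp add: is_svd_def norm_matrix_mult_orthogonal_left norm_matrix_mult_orthogonal_right)
qed

theorem eckart_young:
  fixes B C :: "'n::{finite,linorder} rmat"
  assumes svd: "is_svd B U s V" and "rank C \<le> r" "r \<le> CARD('n)"
  shows "norm (B - svd_trunc r U s V) \<le> norm (B - C)"
proof -
  have U: "orthogonal_matrix U" and V: "orthogonal_matrix V"
    using svd by (simp_all add: is_svd_def)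
  define C' where "C' = transpose U ** C ** V"
  have "U ** C' ** transpose V = (U ** transpose U) ** C ** (V ** transpose V)"
    by (simp add: C'_def matrix_mul_assoc)
  then have "U ** C' ** transpose V = C"
    using U V by (simp add: orthogonal_matrix_def)
  then have "norm (B - C) = norm (diag_mat s - C')"
    using norm_diff_svd[OF svd, of C'] by simp
  moreover have "rank C' \<le> r"
    using U V \<open>rank C \<le> r\<close> by (simp add: C'_def rank_orthogonal_sandwich)
  moreover have "(norm (B - svd_trunc r U s V))\<^sup>2 = (\<Sum>k | r \<le> idx_pos k. (s k)\<^sup>2)"
  proof -
    have "diag_mat s - diag_mat (\<lambda>i. if idx_pos i < r then s i else 0) = diag_mat (\<lambda>i. if idx_pos i < r then 0 else s i)"
      by (simp add: diag_mat_def vec_eq_iff)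
    moreover have tail: "- {k. idx_pos k < r} = {k. r \<le> idx_pos k}"
      by auto
    ultimately show ?thesis
      using norm_diff_svd[OF svd] by (simp add: svd_trunc_def norm_diag_mat_sq if_distrib[of "\<lambda>x. x\<^sup>2"] sum.If_cases tail)
  qed
  moreover have "\<And>i. 0 \<le> s i" "\<And>i j. i \<le> j \<Longrightarrow> s j \<le> s i"
    using svd by (simp_all add: is_svd_def)
  ultimately have "(norm (B - svd_trunc r U s V))\<^sup>2 \<le> (norm (B - C))\<^sup>2"
    using eckart_young_diag[of s C' r] assms(3) by simp
  then show ?thesis
    by (rule power2_le_imp_le) simp
qed

lemma rank_svd_trunc:
  fixes B :: "'n::{finite,linorder} rmat"
  assumes svd: "is_svd B U s V" and "r \<le> CARD('n)"
  shows "rank (svd_trunc r U s V) = min r (rank B)"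
proof -
  define T where "T = {k::'n. idx_pos k < r}"
  define N where "N = {k. s k \<noteq> 0}"
  have U: "orthogonal_matrix U" and V: "orthogonal_matrix (transpose V)"
    and s: "\<And>i. 0 \<le> s i" "\<And>i j. i \<le> j \<Longrightarrow> s j \<le> s i"
    using svd by (simp_all add: is_svd_def)
  have "rank B = card N"
    using svd U V by (simp add: is_svd_def rank_orthogonal_sandwich rank_diag_mat N_def)
  moreover have "{i. (if idx_pos i < r then s i else 0) \<noteq> 0} = T \<inter> N"
    by (auto simp: T_def N_def)
  then have "rank (svd_trunc r U s V) = card (T \<inter> N)"
    using U V by (simp add: svd_trunc_def rank_orthogonal_sandwich rank_diag_mat)
  moreover have "T \<subseteq> N \<or> N \<subseteq> T"
  proof (rule ccontr)
    assume "\<not> (T \<subseteq> N \<or> N \<subseteq> T)"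
    then obtain a b where "a \<in> T" "a \<notin> N" "b \<in> N" "b \<notin> T"
      by blast
    then have "idx_pos a < idx_pos b"
      by (simp add: T_def)
    then have "s b \<le> s a"
      using s(2) strict_mono_less[OF strict_mono_idx_pos] less_imp_le by blast
    then show False
      using s(1)[of b] \<open>a \<notin> N\<close> \<open>b \<in> N\<close> by (simp add: N_def)
  qed
  moreover have "card T = r"
    unfolding T_def by (rule card_idx_pos_less[OF assms(2)])
  moreover have "card (T \<inter> N) = min (card T) (card N)"
  proof (cases "T \<subseteq> N")
    case True
    then show ?thesis
      by (simp add: Int_absorb2 card_mono min_absorb1)
  next
    case False
    with \<open>T \<subseteq> N \<or> N \<subseteq> T\<close> show ?thesis
      by (simp add: Int_absorb1 card_mono min_absorb2)
  qed
  ultimately show ?thesis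
    by simp
qed

theorem theorem2:
  fixes M :: "'a measure"
    and xq xkv :: "'a \<Rightarrow> (real, 'n::{finite,linorder}) vec"
    and W Sq Skv U V :: "'n rmat"
    and s :: "'n \<Rightarrow> real"
    and r :: nat
  assumes "prob_space M"
    and "xq \<in> borel_measurable M" and "xkv \<in> borel_measurable M"
    and "prob_space.indep_var M borel xq borel xkv"
    and "integrable M (\<lambda>\<omega>. (norm (xq \<omega>))\<^sup>2)"
    and "integrable M (\<lambda>\<omega>. (norm (xkv \<omega>))\<^sup>2)"
    and "pos_def_mat (autocorr M xq)" and "pos_def_mat (autocorr M xkv)"
    and "is_sqrt_mat Sq (autocorr M xq)" and "is_sqrt_mat Skv (autocorr M xkv)"
    and "1 \<le> r" and "r \<le> card (UNIV :: 'n set)"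
    and "is_svd (Sq ** W ** Skv) U s V"
  shows "let Wopt = matrix_inv Sq ** svd_trunc r U s V ** matrix_inv Skv in
           rank Wopt \<le> r \<and> (r \<le> rank W \<longrightarrow> rank Wopt = r) \<and>
           (\<forall>Wt. rank Wt \<le> r \<longrightarrow> qk_err M xq xkv W Wopt \<le> qk_err M xq xkv W Wt)"
proof -
  define Wopt where "Wopt = matrix_inv Sq ** svd_trunc r U s V ** matrix_inv Skv"
  have "invertible Sq" "invertible Skv"
    using assms(7-10) by (simp_all add: is_sqrt_mat_def invertible_if_pos_def_square)
  have "Sq ** Wopt ** Skv = (Sq ** matrix_inv Sq) ** svd_trunc r U s V ** (matrix_inv Skv ** Skv)"
    by (simp add: Wopt_def matrix_mul_assoc)
  then have Wopt_sandwich: "Sq ** Wopt ** Skv = svd_trunc r U s V"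
    using \<open>invertible Sq\<close> \<open>invertible Skv\<close> by (simp add: matrix_inv_right matrix_inv_left)
  have rank_Wopt: "rank Wopt = min r (rank W)"
    using rank_svd_trunc[OF assms(13,12)] \<open>invertible Sq\<close> \<open>invertible Skv\<close>
    by (simp add: Wopt_def rank_invertible_sandwich invertible_matrix_inv)
  have qk_err_eq: "qk_err M xq xkv W X = (norm (Sq ** W ** Skv - Sq ** X ** Skv))\<^sup>2" for X
    using qk_err_eq_norm_sq[OF assms(1-6,9,10)]
    by (simp add: matrix_diff_ldistrib matrix_diff_rdistrib)
  have "qk_err M xq xkv W Wopt \<le> qk_err M xq xkv W Wt" if "rank Wt \<le> r" for Wt
  proof -
    have "rank (Sq ** Wt ** Skv) \<le> r"
      using that \<open>invertible Sq\<close> \<open>invertible Skv\<close> by (simp add: rank_invertible_sandwich)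
    then show ?thesis
      using eckart_young[OF assms(13) _ assms(12)] by (simp add: qk_err_eq Wopt_sandwich power_mono)
  qed
  then show ?thesis
    using rank_Wopt by (simp add: Wopt_def)
qed

end
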